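(* Let $\mathcal R_1$ be a collection of $\theta_1$ independent random RDR sets, let $S^*$ be the size-$k$ set returned by the greedy algorithm for weighted maximum coverage on $\mathcal R_1$, and let $\Lambda_1(S^* )=\frac{\hat{INF}_F}{n}\mathcal W_{\mathcal R_1}(S^* )$. Let $S^o$ be a size-$k$ set maximizing $\sigma$. For any $\delta\in(0,1)$, with $a=\ln(1/\delta)$, $$\Pr\Big[\sigma(S^o)\ \le\ \Big(\sqrt{\tfrac{\Lambda_1(S^* )}{1-1/e}+a}+\sqrt a\Big)^2\frac{n}{\theta_1(1-\epsilon')}\Big]\ \ge\ 1-\delta .$$
   Context: Setting: $G=(V,E)$ is a directed graph with $n=|V|$ nodes. A misinformation campaign $F$ spreads in $G$ under the paper's competitive propagation model (TCIC); $INF_F$ is the expected number of nodes reached by $F$. $\sigma(\cdot)$ denotes either of the two submodular set functions (lower bound $\underline\mu$ or upper bound $\overline\mu$ of the expected misinformation-mitigation function). $\hat{INF}_F$ is an $(\epsilon',\delta')$-approximation of $INF_F$, and $\Gamma=\hat{INF}_F/INF_F$; throughout, $\hat{INF}_F$ is treated as fixed with $1-\epsilon'\le\Gamma\le1+\epsilon'$, and $\hat{INF}_F\le n$. Each random RDR set (generated by importance sampling) carries a weight; $\mathcal W_{\mathcal R}(S)$ is the total weight of RDR sets in $\mathcal R$ covered by $S$, and $\frac{\hat{INF}_F}{n}\mathcal W_{\mathcal R}(S)=\sum_i\hat Z_i(S)$ where $\hat Z_i(S)$ is the estimator of the $i$-th set, with $\mathbb E[\hat Z_i(S)]=\Gamma\sigma(S)/n$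 and, for $p=\mathbb E[\hat Z_i(S)]$, $\lambda>0$: $\Pr[\sum_{i\le\theta}\hat Z_i(S)-\theta p\le-\lambda]\le\exp(-\lambda^2/(4\theta p\hat{INF}_F/n))$. The greedy algorithm picks $k$ nodes greedily maximizing total covered weight, and guarantees $\Lambda_1(S^* )\ge(1-1/e)\Lambda_1(S^o)$. *)

theory Defs
  imports "HOL-Probability.Probability"
begin

text \<open>RDR sets are modelled as random sets R i (i-th sample, i < theta) with random
 importance-sampling weights w i. A node set S covers RDR set i iff S meets it.\<close>

definition covers :: "'v set \<Rightarrow> 'v set \<Rightarrow> bool" where
  "covers S Rs \<longleftrightarrow> S \<inter> Rs \<noteq> {}"

definition cov_weight :: "nat \<Rightarrow> (nat \<Rightarrow> 'a \<Rightarrow> 'v set) \<Rightarrow> (nat \<Rightarrow> 'a \<Rightarrow> real) \<Rightarrow> 'v set \<Rightarrow> 'a \<Rightarrow> real" where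
  "cov_weight \<theta> R w S \<omega> = (\<Sum>i<\<theta>. if covers S (R i \<omega>) then w i \<omega> else 0)"

definition Zhat :: "real \<Rightarrow> nat \<Rightarrow> (nat \<Rightarrow> 'a \<Rightarrow> 'v set) \<Rightarrow> (nat \<Rightarrow> 'a \<Rightarrow> real) \<Rightarrow> nat \<Rightarrow> 'v set \<Rightarrow> 'a \<Rightarrow> real" where
  "Zhat INFh n R w i S \<omega> = INFh / real n * (if covers S (R i \<omega>) then w i \<omega> else 0)"

definition Lambda :: "real \<Rightarrow> nat \<Rightarrow> nat \<Rightarrow> (nat \<Rightarrow> 'a \<Rightarrow> 'v set) \<Rightarrow> (nat \<Rightarrow> 'a \<Rightarrow> real) \<Rightarrow> 'v set \<Rightarrow> 'a \<Rightarrow> real" where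
  "Lambda INFh n \<theta> R w S \<omega> = INFh / real n * cov_weight \<theta> R w S \<omega>"

end

theory Submission
  imports Defs
begin

(*
  Let \<mu> = \<theta>1 \<Gamma> \<sigma>(So) / n be the expectation of \<Lambda>1(So). Taking \<lambda> = 2 sqrt (a \<mu>) in the
  lower-tail bound makes the bad event {\<Lambda>1(So) \<le> \<mu> - \<lambda>} have probability at most
  exp (-a n / INFh) \<le> exp (-a) = \<delta>. Off that event (sqrt \<mu> - sqrt a)^2 < \<Lambda>1(So) + a, and the
  greedy guarantee bounds \<Lambda>1(So) by \<Lambda>1(Sstar) / (1 - 1/e); solving for \<mu> and using
  \<Gamma> \<ge> 1 - \<epsilon>' gives the claimed bound on \<sigma>(So).
*)

lemma measurable_count_space_finite_range:
  assumes f: "f \<in> measurable M (count_space UNIV)" and "finite A" and "\<And>x. f x \<in> A"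
  shows "f \<in> measurable M (count_space A)"
  using assms measurable_sets[OF f] by (auto simp: measurable_count_space_eq2)

lemma measurable_compose_finite_valued:
  assumes "g \<in> measurable M (count_space UNIV)" and "finite A" and "\<And>x. g x \<in> A"
    and "\<And>a. a \<in> A \<Longrightarrow> f a \<in> measurable M N"
  shows "(\<lambda>x. f (g x) x) \<in> measurable M N"
  by (rule measurable_compose_countable'[where I = A])
    (use assms in \<open>auto intro: measurable_count_space_finite_range countable_finite\<close>)

lemma measurable_Lambda:
  assumes "\<And>i. R i \<in> measurable M (count_space UNIV)" and [measurable]: "\<And>i. w i \<in> borel_measurable M"
  shows "Lambda c n \<theta> R w S \<in> borel_measurable M"
proof -
  have [measurable]: "Measurable.pred M (\<lambda>\<omega>. covers S (R i \<omega>))" for i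
    by (rule measurable_compose[OF assms(1) measurable_count_space])
  show ?thesis unfolding Lambda_def cov_weight_def by measurable
qed

lemma measurable_Lambda_random_set:
  assumes "\<And>i. R i \<in> measurable M (count_space UNIV)" and "\<And>i. w i \<in> borel_measurable M"
    and "S \<in> measurable M (count_space UNIV)" and "finite V" and "\<And>\<omega>. S \<omega> \<subseteq> V"
  shows "(\<lambda>\<omega>. Lambda c n \<theta> R w (S \<omega>) \<omega>) \<in> borel_measurable M"
  by (rule measurable_compose_finite_valued[where f = "Lambda c n \<theta> R w" and A = "Pow V"])
    (use assms in \<open>auto intro: measurable_Lambda\<close>)

lemma sum_Zhat_eq_Lambda: "(\<Sum>i<\<theta>. Zhat c n R w i S \<omega>) = Lambda c n \<theta> R w S \<omega>"
  unfolding Lambda_def cov_weight_def Zhat_def by (simp add: sum_distrib_left)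

lemma (in prob_space) prob_ge_one_minus_exceptional:
  assumes "{x \<in> space M. P x} \<in> events" and "B \<in> events" and "prob B \<le> \<delta>"
    and "\<And>x. x \<in> space M \<Longrightarrow> x \<notin> B \<Longrightarrow> P x"
  shows "prob {x \<in> space M. P x} \<ge> 1 - \<delta>"
proof -
  have "1 - \<delta> \<le> prob (space M - B)" using assms(2,3) by (simp add: prob_compl)
  also have "\<dots> \<le> prob {x \<in> space M. P x}" using assms by (intro finite_measure_mono) auto
  finally show ?thesis .
qed

lemma exp_tail_at_sqrt_scale_le:
  fixes \<mu> c a :: real
  assumes "0 < \<mu>" and "0 < c" and "c \<le> 1" and "0 \<le> a"
  shows "exp (- (2 * sqrt (a * \<mu>))\<^sup>2 / (4 * \<mu> * c)) \<le> exp (- a)"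
proof -
  have "(2 * sqrt (a * \<mu>))\<^sup>2 / (4 * \<mu> * c) = a / c"
    using assms by (simp add: power_mult_distrib)
  also have "a \<le> a / c" using assms by (simp add: le_divide_eq mult_left_le)
  finally show ?thesis by simp
qed

lemma le_square_sqrt_add_sqrt_of_lower_deviation:
  fixes \<mu> a Z L :: real
  assumes "0 \<le> \<mu>" and "0 \<le> a" and "\<mu> - 2 * sqrt (a * \<mu>) < Z" and "Z \<le> L"
  shows "\<mu> \<le> (sqrt (L + a) + sqrt a)\<^sup>2"
proof -
  have "(sqrt \<mu> - sqrt a)\<^sup>2 = \<mu> - 2 * sqrt (a * \<mu>) + a"
    using assms by (simp add: power2_diff real_sqrt_mult)
  also have "\<dots> \<le> L + a" using assms by linarith
  finally have "\<bar>sqrt \<mu> - sqrt a\<bar> \<le> sqrt (L + a)"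
    using real_sqrt_le_mono by fastforce
  then have "sqrt \<mu> \<le> sqrt (L + a) + sqrt a" by linarith
  then have "(sqrt \<mu>)\<^sup>2 \<le> (sqrt (L + a) + sqrt a)\<^sup>2" using assms(1) by (intro power_mono) auto
  then show ?thesis using assms by simp
qed

lemma (in prob_space) prob_mean_le_square_sqrt_add_sqrt:
  fixes X Y :: "'a \<Rightarrow> real" and \<mu> c a :: real
  assumes [measurable]: "X \<in> borel_measurable M" "Y \<in> borel_measurable M"
    and c: "0 < c" "c \<le> 1" and a: "0 < a"
    and tail: "\<And>t. 0 < t \<Longrightarrow> prob {x \<in> space M. X x - \<mu> \<le> - t} \<le> exp (- t\<^sup>2 / (4 * \<mu> * c))"
    and X_le_Y: "\<And>x. x \<in> space M \<Longrightarrow> X x \<le> Y x"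
  shows "1 - exp (- a) \<le> prob {x \<in> space M. \<mu> \<le> (sqrt (Y x + a) + sqrt a)\<^sup>2}"
proof (cases "\<mu> \<le> 0")
  case True
  then have "{x \<in> space M. \<mu> \<le> (sqrt (Y x + a) + sqrt a)\<^sup>2} = space M"
    by (auto intro: order_trans)
  then show ?thesis by (simp add: prob_space)
next
  case False
  let ?B = "{x \<in> space M. X x - \<mu> \<le> - (2 * sqrt (a * \<mu>))}"
  have "prob ?B \<le> exp (- (2 * sqrt (a * \<mu>))\<^sup>2 / (4 * \<mu> * c))"
    using False a by (intro tail) simp
  also have "\<dots> \<le> exp (- a)" using False c a by (intro exp_tail_at_sqrt_scale_le) auto
  finally have "prob ?B \<le> exp (- a)" .
  moreover have "\<mu> \<le> (sqrt (Y x + a) + sqrt a)\<^sup>2" if "x \<in> space M" "x \<notin> ?B" for x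
  proof (rule le_square_sqrt_add_sqrt_of_lower_deviation)
    show "\<mu> - 2 * sqrt (a * \<mu>) < X x" using that by simp
  qed (use that False a X_le_Y in auto)
  ultimately show ?thesis by (intro prob_ge_one_minus_exceptional[where B = ?B]) measurable
qed

lemma le_divide_of_scaled_mean_le:
  fixes x \<Gamma> \<epsilon> s :: real
  assumes "0 < \<theta>" and "0 < n" and "\<epsilon> < 1" and "1 - \<epsilon> \<le> \<Gamma>" and "0 \<le> s"
    and "\<theta> * (\<Gamma> * x / n) \<le> s"
  shows "x \<le> s * n / (\<theta> * (1 - \<epsilon>))"
proof (cases "x \<le> 0")
  case True
  then show ?thesis using assms by (auto intro: order_trans)
next
  case False
  have "x * (\<theta> * (1 - \<epsilon>)) / n = (1 - \<epsilon>) * (\<theta> * x / n)" by simp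
  also have "\<dots> \<le> \<Gamma> * (\<theta> * x / n)" using False assms by (intro mult_right_mono) auto
  also have "\<dots> = \<theta> * (\<Gamma> * x / n)" by simp
  finally show ?thesis using assms by (simp add: pos_le_divide_eq pos_divide_le_eq)
qed

theorem mainTheorem6:
  fixes M :: "'a measure"
    and V :: "'v set" and n k \<theta>1 :: nat
    and \<sigma> :: "'v set \<Rightarrow> real"
    and INFF INFh \<epsilon>' \<Gamma> \<delta> :: real
    and R :: "nat \<Rightarrow> 'a \<Rightarrow> 'v set" and w :: "nat \<Rightarrow> 'a \<Rightarrow> real"
    and Sstar :: "'a \<Rightarrow> 'v set" and So :: "'v set"
  assumes prob: "prob_space M"
    and finV: "finite V" and n_def: "n = card V" and n_pos: "n > 0"
    and theta_pos: "\<theta>1 > 0"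
    and R_meas: "\<And>i. R i \<in> measurable M (count_space UNIV)"
    and R_sub: "\<And>i \<omega>. R i \<omega> \<subseteq> V"
    and w_meas: "\<And>i. w i \<in> borel_measurable M"
    and w_nonneg: "\<And>i \<omega>. w i \<omega> \<ge> 0"
    and INF_pos: "INFF > 0" and INFh_pos: "INFh > 0" and INFh_le: "INFh \<le> real n"
    and eps: "0 < \<epsilon>'" "\<epsilon>' < 1"
    and Gamma_def: "\<Gamma> = INFh / INFF"
    and Gamma_bounds: "1 - \<epsilon>' \<le> \<Gamma>" "\<Gamma> \<le> 1 + \<epsilon>'"
    and expect: "\<And>i S. i < \<theta>1 \<Longrightarrow> S \<subseteq> V \<Longrightarrow>
        integrable M (Zhat INFh n R w i S) \<and>
        prob_space.expectation M (Zhat INFh n R w i S) = \<Gamma> * \<sigma> S / real n"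
    and conc: "\<And>S lam. S \<subseteq> V \<Longrightarrow> lam > 0 \<Longrightarrow>
        measure M {\<omega> \<in> space M. (\<Sum>i<\<theta>1. Zhat INFh n R w i S \<omega>)
              - real \<theta>1 * (\<Gamma> * \<sigma> S / real n) \<le> - lam}
          \<le> exp (- lam\<^sup>2 / (4 * real \<theta>1 * (\<Gamma> * \<sigma> S / real n) * INFh / real n))"
    and So_sub: "So \<subseteq> V" and So_card: "card So = k"
    and So_max: "\<And>S. S \<subseteq> V \<Longrightarrow> card S = k \<Longrightarrow> \<sigma> S \<le> \<sigma> So"
    and Sstar_meas: "Sstar \<in> measurable M (count_space UNIV)"
    and Sstar_sub: "\<And>\<omega>. Sstar \<omega> \<subseteq> V" and Sstar_card: "\<And>\<omega>. card (Sstar \<omega>) = k"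
    and greedy: "\<And>\<omega>. Lambda INFh n \<theta>1 R w (Sstar \<omega>) \<omega>
                    \<ge> (1 - 1 / exp 1) * Lambda INFh n \<theta>1 R w So \<omega>"
    and delta: "0 < \<delta>" "\<delta> < 1"
  shows "measure M {\<omega> \<in> space M. \<sigma> So \<le>
           (sqrt (Lambda INFh n \<theta>1 R w (Sstar \<omega>) \<omega> / (1 - 1 / exp 1) + ln (1 / \<delta>))
             + sqrt (ln (1 / \<delta>)))\<^sup>2 * real n / (real \<theta>1 * (1 - \<epsilon>'))}
         \<ge> 1 - \<delta>"
proof -
  interpret prob_space M by (rule prob)
  define a where "a = ln (1 / \<delta>)"
  define \<mu> where "\<mu> = real \<theta>1 * (\<Gamma> * \<sigma> So / real n)"
  have [measurable]: "(\<lambda>\<omega>. Lambda INFh n \<theta>1 R w (Sstar \<omega>) \<omega>) \<in> borel_measurable M"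
    using R_meas w_meas Sstar_meas finV Sstar_sub by (rule measurable_Lambda_random_set)
  have scale: "4 * real \<theta>1 * (\<Gamma> * \<sigma> So / real n) * INFh / real n = 4 * \<mu> * (INFh / real n)"
    by (simp add: \<mu>_def)
  have greedy': "Lambda INFh n \<theta>1 R w So \<omega> \<le> Lambda INFh n \<theta>1 R w (Sstar \<omega>) \<omega> / (1 - 1 / exp 1)" for \<omega>
    using greedy[of \<omega>] by (simp add: pos_le_divide_eq mult.commute)
  have "1 - exp (- a) \<le> prob {\<omega> \<in> space M.
      \<mu> \<le> (sqrt (Lambda INFh n \<theta>1 R w (Sstar \<omega>) \<omega> / (1 - 1 / exp 1) + a) + sqrt a)\<^sup>2}"
  proof (rule prob_mean_le_square_sqrt_add_sqrt)
    show "prob {\<omega> \<in> space M. Lambda INFh n \<theta>1 R w So \<omega> - \<mu> \<le> - t}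
        \<le> exp (- t\<^sup>2 / (4 * \<mu> * (INFh / real n)))" if "0 < t" for t
      using conc[OF So_sub that] unfolding sum_Zhat_eq_Lambda scale \<mu>_def[symmetric] .
  qed (use delta INFh_pos INFh_le greedy' measurable_Lambda[OF R_meas w_meas] in \<open>auto simp: a_def\<close>)
  also have "\<dots> \<le> prob {\<omega> \<in> space M. \<sigma> So \<le>
      (sqrt (Lambda INFh n \<theta>1 R w (Sstar \<omega>) \<omega> / (1 - 1 / exp 1) + a) + sqrt a)\<^sup>2 * real n
        / (real \<theta>1 * (1 - \<epsilon>'))}"
    using eps Gamma_bounds theta_pos n_pos unfolding \<mu>_def
    by (intro finite_measure_mono) (auto intro: le_divide_of_scaled_mean_le)
  also have "exp (- a) = \<delta>" using delta by (simp add: a_def ln_div exp_minus)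
  finally show ?thesis unfolding a_def .
qed

end
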